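(* For all integers $n,m$, \[\Phi_{n,m}(u,v;1,1;z,w;q)=\frac{\Phi_{n,m}(u,v;z,w;q)-zwq^{m-1}\Phi_{n,m}(u/z,v/w;z,w;q)}{1-zwq^{-1}}.\] In particular $\Phi_{n,m}(1,1;1,1;z,w;q)=\frac{1-zwq^{n+m-1}}{1-zwq^{-1}}\Phi_{n,m}(z,w;q)$.
   Context: For $n\in\mathbb{Z}$, $(a;q)_n=(a;q)_\infty/(aq^n;q)_\infty$ ($1/(q;q)_n=0$ for $n<0$), $(a_1,\dots,a_k;q)_n=\prod_i(a_i;q)_n$. $\Phi_{n,m}(z,w;q):=\frac{(zwq;q)_{n+m}}{(q,zq,zwq;q)_n(q,wq,zwq;q)_m}$. $\Phi_{n,m}(u,v;z,w;q):=\Phi_{n,m}(z/q,w;q)-\frac{uz}{(z;q)_2}\Phi_{n-1,m}(zq,w/q;q)+\frac{uvzw^2}{(w,zw;q)_2}\Phi_{n-1,m-1}(z,wq;q)$. With $Q=\{y\in\mathbb{Z}^3:y_1+y_2+y_3=0\}$, $\Phi_{n,m;y}(z,w;q):=\frac{(zwq;q)_{n+m}}{(q;q)_{n-y_1}(zq;q)_{n-y_2}(zwq;q)_{n-y_3}(q;q)_{m+y_3}(wq;q)_{m+y_2}(zwq;q)_{m+y_1}}$, and, with $\rho=(1,2,3)$, $\sigma\in S_3$ in one-line notation, $\chi$ the indicator, \[\Phi_{n,m}(u,v;c,d;z,w;q):=\sum_{\sigma\in S_3}\operatorname{sgn}(\sigma)(uz)^{\sigma_1-1}(v/d)^{\chi(\sigma_3=1)}(c/u)^{\chi(\sigma_1=3)}(dw)^{3-\sigma_3}\Phi_{n,m;\sigma-\rho}(z/q,w/q;q).\]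 *)

theory Defs
  imports Complex_Main "HOL-Combinatorics.Permutations"
begin

text \<open>q-Pochhammer symbol (a;q)_n for integer n, i.e. (a;q)_inf/(a q^n;q)_inf:
  for n >= 0 the finite product, for n < 0 the reciprocal of prod_{k=1}^{-n} (1 - a q^(-k)).
  Note: for n < 0, (q;q)_n contains the factor 1/(1-q^0) = 1/0, so (by HOL's convention
  1/0 = 0) the reciprocal 1/(q;q)_n evaluates to 0, matching the paper's convention.\<close>
definition qpoch :: "complex \<Rightarrow> complex \<Rightarrow> int \<Rightarrow> complex" where
  "qpoch a q n =
     (if 0 \<le> n then (\<Prod>k<nat n. (1 - a * q ^ k))
      else 1 / (\<Prod>k\<in>{1..nat (-n)}. (1 - a * q powi (- int k))))"

definition PhiA :: "int \<Rightarrow> int \<Rightarrow> complex \<Rightarrow> complex \<Rightarrow> complex \<Rightarrow> complex" where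
  "PhiA n m z w q =
     qpoch (z*w*q) q (n+m) /
     (qpoch q q n * qpoch (z*q) q n * qpoch (z*w*q) q n *
      qpoch q q m * qpoch (w*q) q m * qpoch (z*w*q) q m)"

definition PhiU :: "int \<Rightarrow> int \<Rightarrow> complex \<Rightarrow> complex \<Rightarrow> complex \<Rightarrow> complex \<Rightarrow> complex \<Rightarrow> complex" where
  "PhiU n m u v z w q =
     PhiA n m (z/q) w q
     - u*z / qpoch z q 2 * PhiA (n-1) m (z*q) (w/q) q
     + u*v*z*w^2 / (qpoch w q 2 * qpoch (z*w) q 2) * PhiA (n-1) (m-1) z (w*q) q"

definition PhiY :: "int \<Rightarrow> int \<Rightarrow> int \<Rightarrow> int \<Rightarrow> int \<Rightarrow> complex \<Rightarrow> complex \<Rightarrow> complex \<Rightarrow> complex" where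
  "PhiY n m y1 y2 y3 z w q =
     qpoch (z*w*q) q (n+m) /
     (qpoch q q (n-y1) * qpoch (z*q) q (n-y2) * qpoch (z*w*q) q (n-y3) *
      qpoch q q (m+y3) * qpoch (w*q) q (m+y2) * qpoch (z*w*q) q (m+y1))"

text \<open>Phi_{n,m}(u,v;c,d;z,w;q); permutations sigma of {1,2,3} in one-line notation
  (sigma 1, sigma 2, sigma 3), rho = (1,2,3).\<close>
definition PhiCD :: "int \<Rightarrow> int \<Rightarrow> complex \<Rightarrow> complex \<Rightarrow> complex \<Rightarrow> complex \<Rightarrow> complex \<Rightarrow> complex \<Rightarrow> complex \<Rightarrow> complex" where
  "PhiCD n m u v c d z w q =
     (\<Sum>\<sigma> \<in> {\<sigma>. \<sigma> permutes {1::int,2,3}}.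
        of_int (sign \<sigma>) * (u*z) ^ nat (\<sigma> 1 - 1)
        * (v/d) ^ (if \<sigma> 3 = 1 then 1 else 0)
        * (c/u) ^ (if \<sigma> 1 = 3 then 1 else 0)
        * (d*w) ^ nat (3 - \<sigma> 3)
        * PhiY n m (\<sigma> 1 - 1) (\<sigma> 2 - 2) (\<sigma> 3 - 3) (z/q) (w/q) q)"

end

theory Submission
  imports Defs
begin

text \<open>With \<open>p = zw/q\<close>, \<open>X = q\<^sup>n\<close> and \<open>Y = q\<^sup>m\<close>, every \<open>\<Phi>\<close>-term occurring in the identity
  is the base term \<open>\<Phi>\<^sub>n\<^sub>,\<^sub>m\<^sub>;\<^sub>0(z/q, w/q; q)\<close> times an explicit rational function of \<open>z, w, q, X, Y\<close>,
  obtained by shifting indices and bases of q-Pochhammer symbols one factor at a time.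
  For \<open>c = d = 1\<close> the alternating sum over \<open>S\<^sub>3\<close> has six terms, which pair up into the
  coefficients of \<open>1\<close>, \<open>u\<close> and \<open>uv\<close>; after clearing denominators each coefficient identity is
  a polynomial identity in \<open>z, w, q, X, Y\<close>.  The special case \<open>u = v = 1\<close> adds one more such
  identity.\<close>

definition qgeneric :: "complex \<Rightarrow> complex \<Rightarrow> bool" where
  "qgeneric a q \<longleftrightarrow> (\<forall>k::int. a * q powi k \<noteq> 1)"

lemma qgeneric_iff_not_powi:
  assumes "q \<noteq> 0"
  shows "qgeneric a q \<longleftrightarrow> (\<forall>k::int. a \<noteq> q powi k)"
proof -
  have "a * q powi k = 1 \<longleftrightarrow> a = q powi (- k)" for k
    using assms by (auto simp: power_int_minus field_simps)
  then show ?thesis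
    unfolding qgeneric_def by (metis minus_minus)
qed

lemma qgeneric_mult_powi:
  assumes "q \<noteq> 0"
  shows "qgeneric (a * q powi j) q \<longleftrightarrow> qgeneric a q"
proof -
  have shift: "a * q powi j * q powi k = a * q powi (j + k)" for k
    using assms by (simp add: power_int_add)
  show ?thesis
    unfolding qgeneric_def shift
  proof (intro iffI allI)
    fix k
    assume "\<forall>k. a * q powi (j + k) \<noteq> 1"
    from this[rule_format, of "k - j"] show "a * q powi k \<noteq> 1" by simp
  qed auto
qed

lemma qgeneric_mult_q: "q \<noteq> 0 \<Longrightarrow> qgeneric (a * q) q \<longleftrightarrow> qgeneric a q"
  using qgeneric_mult_powi[of q a 1] by simp

lemma qgeneric_divide_q: "q \<noteq> 0 \<Longrightarrow> qgeneric (a / q) q \<longleftrightarrow> qgeneric a q"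
  using qgeneric_mult_powi[of q a "-1"] by (simp add: power_int_minus divide_inverse)

lemma qgeneric_factor_nonzero: "qgeneric a q \<Longrightarrow> 1 - a * q powi k \<noteq> 0"
  unfolding qgeneric_def by auto

lemma qpoch_two: "qpoch a q 2 = (1 - a) * (1 - a * q)"
  unfolding qpoch_def by (simp add: numeral_2_eq_2)

lemma qpoch_add_one_nonneg:
  assumes "0 \<le> n"
  shows "qpoch a q (n + 1) = qpoch a q n * (1 - a * q powi n)"
proof -
  have "nat (n + 1) = Suc (nat n)" using assms by simp
  with assms show ?thesis by (simp add: qpoch_def power_int_def)
qed

lemma qpoch_add_one:
  assumes "qgeneric a q"
  shows "qpoch a q (n + 1) = qpoch a q n * (1 - a * q powi n)"
proof (cases "0 \<le> n")
  case True
  then show ?thesis by (rule qpoch_add_one_nonneg)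
next
  case False
  define M where "M = nat (- n - 1)"
  then have M: "nat (- n) = Suc M" "n = - int (Suc M)" using False by auto
  define P where "P = (\<Prod>k\<in>{1..M}. 1 - a * q powi - int k)"
  have "(\<Prod>k\<in>{1..Suc M}. 1 - a * q powi - int k) = P * (1 - a * q powi n)"
    unfolding P_def using M by (simp add: prod.nat_ivl_Suc')
  moreover have "1 - a * q powi n \<noteq> 0" "P \<noteq> 0"
    using qgeneric_factor_nonzero[OF assms] by (auto simp: P_def prod_zero_iff)
  moreover have "qpoch a q (n + 1) = 1 / P"
    using M by (cases "M = 0") (simp_all add: qpoch_def P_def)
  ultimately show ?thesis
    using M by (simp add: qpoch_def)
qed

lemma qpoch_add_two:
  assumes "q \<noteq> 0" and "qgeneric a q"
  shows "qpoch a q (n + 2) = qpoch a q n * (1 - a * q powi n) * (1 - a * q * q powi n)"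
  using qpoch_add_one[OF assms(2), of "n + 1"] qpoch_add_one[OF assms(2), of n] assms(1)
  by (simp add: power_int_add_1' add.assoc mult.assoc)

lemma qpoch_diff_one:
  assumes "q \<noteq> 0" and "qgeneric a q"
  shows "qpoch a q (n - 1) = qpoch a q n / (1 - a * q powi n / q)"
  using qpoch_add_one[OF assms(2), of "n - 1"] qgeneric_factor_nonzero[OF assms(2), of "n - 1"] assms(1)
  by (simp add: power_int_diff)

lemma qpoch_mult_base:
  assumes "q \<noteq> 0" and "qgeneric a q"
  shows "(1 - a) * qpoch (a * q) q n = qpoch a q (n + 1)"
proof (induction n rule: int_induct[where k = 0])
  case base
  show ?case by (simp add: qpoch_def)
next
  case (step1 i)
  have "(1 - a) * qpoch (a * q) q (i + 1) = (1 - a) * qpoch (a * q) q i * (1 - a * q powi (i + 1))"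
    using assms by (simp add: qgeneric_mult_q qpoch_add_one power_int_add_1' mult.assoc)
  also have "\<dots> = qpoch a q (i + 1) * (1 - a * q powi (i + 1))"
    using step1.IH by simp
  also have "\<dots> = qpoch a q (i + 1 + 1)"
    by (rule qpoch_add_one[symmetric, OF assms(2)])
  finally show ?case .
next
  case (step2 i)
  have "(1 - a) * qpoch (a * q) q (i - 1) * (1 - a * q powi i) = (1 - a) * qpoch (a * q) q i"
    using assms qpoch_add_one[of "a * q" q "i - 1"]
    by (simp add: qgeneric_mult_q power_int_diff mult.assoc)
  also have "\<dots> = qpoch a q (i - 1 + 1) * (1 - a * q powi i)"
    using step2.IH assms(2) by (simp add: qpoch_add_one)
  finally show ?case
    using qgeneric_factor_nonzero[OF assms(2)] by simp
qed

text \<open>The base \<open>q\<close> is not generic: \<open>(q;q)\<^sub>n\<close> contains the factor \<open>1 - q\<cdot>q\<^sup>-\<^sup>1 = 0\<close> for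
  \<open>n < 0\<close>, so only the reciprocal of \<open>(q;q)\<^sub>n\<close> shifts cleanly.\<close>

lemma qfact_negative:
  assumes "q \<noteq> 0" and "n < 0"
  shows "qpoch q q n = 0"
proof -
  have "(\<Prod>k\<in>{1..nat (- n)}. 1 - q * q powi - int k) = 0"
    using assms by (intro prod_zero bexI[of _ 1]) (auto simp: power_int_minus)
  with assms(2) show ?thesis by (simp add: qpoch_def)
qed

lemma inverse_qfact_diff_one:
  assumes "q \<noteq> 0" and "\<forall>k::int. k \<noteq> 0 \<longrightarrow> q powi k \<noteq> 1"
  shows "inverse (qpoch q q (n - 1)) = (1 - q powi n) * inverse (qpoch q q n)"
proof (cases "1 \<le> n")
  case True
  then have "qpoch q q n = qpoch q q (n - 1) * (1 - q * q powi (n - 1))"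
    using qpoch_add_one_nonneg[of "n - 1" q q] by simp
  moreover have "1 - q powi n \<noteq> 0" using assms(2) True by auto
  ultimately show ?thesis
    using assms(1) by (simp add: power_int_diff inverse_mult_distrib)
next
  case False
  then show ?thesis
    using qfact_negative[OF assms(1)] by (cases "n = 0") simp_all
qed

lemma inverse_qfact_diff_two:
  assumes "q \<noteq> 0" and "\<forall>k::int. k \<noteq> 0 \<longrightarrow> q powi k \<noteq> 1"
  shows "inverse (qpoch q q (n - 2)) = (1 - q powi n / q) * (1 - q powi n) * inverse (qpoch q q n)"
  using inverse_qfact_diff_one[OF assms, of "n - 1"] inverse_qfact_diff_one[OF assms, of n] assms(1)
  by (simp add: power_int_diff)

lemma PhiCD_1_1_expand:
  "PhiCD n m u v 1 1 z w q =
     (PhiY n m 0 0 0 (z/q) (w/q) q - w * PhiY n m 0 1 (-1) (z/q) (w/q) q)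
   + u * (- z * PhiY n m 1 (-1) 0 (z/q) (w/q) q + z^2 * w * PhiY n m 2 (-1) (-1) (z/q) (w/q) q)
   + u * v * (z * w^2 * PhiY n m 1 1 (-2) (z/q) (w/q) q - z^2 * w^2 * PhiY n m 2 0 (-2) (z/q) (w/q) q)"
proof -
  have perms: "(\<Sum>\<sigma> \<in> {\<sigma>. \<sigma> permutes {1::int,2,3}}. f \<sigma>) =
      f id + f (transpose 2 3) + f (transpose 1 2) + f (transpose 1 2 \<circ> transpose 2 3)
    + f (transpose 1 3) + f (transpose 1 3 \<circ> transpose 2 3)" for f :: "(int \<Rightarrow> int) \<Rightarrow> complex"
    by (simp add: sum_over_permutations_insert algebra_simps)
  show ?thesis
    unfolding PhiCD_def perms
    by (cases "u = 0")
      (simp_all add: sign_compose sign_swap_id permutation_swap_id transpose_def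
        power2_eq_square algebra_simps)
qed

lemma PhiU_combination:
  assumes "z \<noteq> 0" and "w \<noteq> 0"
  shows "PhiU n m u v z w q - z * w * q powi (m - 1) * PhiU n m (u/z) (v/w) z w q
    = (1 - z * w * q powi (m - 1)) * PhiA n m (z/q) w q
    - u * z * (1 - w * q powi (m - 1)) / qpoch z q 2 * PhiA (n-1) m (z*q) (w/q) q
    + u * v * z * w^2 * (1 - q powi (m - 1)) / (qpoch w q 2 * qpoch (z*w) q 2)
        * PhiA (n-1) (m-1) z (w*q) q"
  unfolding PhiU_def using assms
  by (simp add: field_simps power2_eq_square) (simp add: algebra_simps diff_divide_distrib add_divide_distrib)

context
  fixes q z w p X Y :: complex and n m :: int
  assumes q_nonzero: "q \<noteq> 0"
    and q_not_root_of_unity: "\<forall>k::int. k \<noteq> 0 \<longrightarrow> q powi k \<noteq> 1"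
    and z_generic: "qgeneric z q" and w_generic: "qgeneric w q" and p_generic: "qgeneric p q"
    and p_eq: "p = z * w / q" and X_eq: "X = q powi n" and Y_eq: "Y = q powi m"
begin

lemma qgeneric_products_neq_one:
  assumes "qgeneric a q"
  shows "a \<noteq> 1" "a * q powi k \<noteq> 1" "a * (q powi k * q powi l) \<noteq> 1"
  using assms q_nonzero unfolding qgeneric_def
  by (metis mult_1_right power_int_0_right, auto simp flip: power_int_add)

lemma qpoch_mult_q:
  assumes "qgeneric a q"
  shows "qpoch (a * q) q k = qpoch a q k * (1 - a * q powi k) / (1 - a)"
proof -
  have "(1 - a) * qpoch (a * q) q k = qpoch a q k * (1 - a * q powi k)"
    using qpoch_mult_base[OF q_nonzero assms] qpoch_add_one[OF assms] by simp
  then show ?thesis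
    using qgeneric_products_neq_one(1)[OF assms] by (simp add: field_simps)
qed

lemma qpoch_mult_q_diff_two: "qgeneric a q \<Longrightarrow> qpoch (a * q) q (k - 2) = qpoch a q (k - 1) / (1 - a)"
  using qpoch_mult_base[OF q_nonzero, of a "k - 2"] qgeneric_products_neq_one(1)[of a]
  by (simp add: field_simps)

lemma mult_q_inverse_q: "a * q * b * inverse q = a * b"
  using q_nonzero by simp

text \<open>These rules rewrite every q-Pochhammer symbol occurring in a \<open>\<Phi>\<close>-term into the atoms
  \<open>(a;q)\<^sub>n\<close>, \<open>(a;q)\<^sub>m\<close>, \<open>(p;q)\<^sub>n\<^sub>+\<^sub>m\<close> (\<open>a \<in> {z, w, p}\<close>) and \<open>1/(q;q)\<^sub>n\<close>, \<open>1/(q;q)\<^sub>m\<close>, times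
  factors \<open>1 - a q\<^sup>k X\<close>, \<open>1 - a q\<^sup>k Y\<close>.\<close>

lemmas normalisation_rules = power_int_add[OF disjI1[OF q_nonzero]] qgeneric_products_neq_one
  qgeneric_mult_q[OF q_nonzero] z_generic w_generic p_generic qpoch_mult_q
  qpoch_add_one qpoch_add_two[OF q_nonzero] qpoch_diff_one[OF q_nonzero]
  inverse_qfact_diff_one[OF q_nonzero q_not_root_of_unity]
  inverse_qfact_diff_two[OF q_nonzero q_not_root_of_unity] mult_q_inverse_q

lemma bases_and_indices:
  "z/q * (w/q) * q = p" "z/q * q = z" "w/q * q = w" "z/q * w * q = p*q" "z*q * (w/q) * q = p*q*q"
  "z * (w*q) * q = p*q*q*q" "z * w * q = p*q*q" "n - 1 + m = n + m - 1" "n - 1 + (m - 1) = n + m - 2"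
  using q_nonzero by (auto simp: p_eq field_simps)

lemma PhiY_ratios:
  defines "T \<equiv> \<lambda>y1 y2 y3. PhiY n m y1 y2 y3 (z/q) (w/q) q"
  shows "T 0 1 (-1) = T 0 0 0 * ((1 - Y) * (1 - z*X/q) / ((1 - p*X) * (1 - w*Y)))"
    and "T 1 (-1) 0 = T 0 0 0 * ((1 - X) * (1 - w*Y/q) / ((1 - z*X) * (1 - p*Y)))"
    and "T 1 1 (-2) = T 0 0 0 * ((1 - X) * (1 - Y) * (1 - Y/q) * (1 - z*X/q)
                                 / ((1 - p*X) * (1 - p*q*X) * (1 - w*Y) * (1 - p*Y)))"
    and "T 2 0 (-2) = T 0 0 0 * ((1 - X) * (1 - X/q) * (1 - Y) * (1 - Y/q)
                                 / ((1 - p*X) * (1 - p*q*X) * (1 - p*Y) * (1 - p*q*Y)))"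
    and "T 2 (-1) (-1) = T 0 0 0 * ((1 - X) * (1 - X/q) * (1 - Y) * (1 - w*Y/q)
                                 / ((1 - z*X) * (1 - p*X) * (1 - p*Y) * (1 - p*q*Y)))"
  unfolding T_def PhiY_def bases_and_indices
  by (simp add: normalisation_rules divide_inverse inverse_mult_distrib X_eq Y_eq)+

lemma PhiA_ratios:
  defines "T0 \<equiv> PhiY n m 0 0 0 (z/q) (w/q) q"
  shows "PhiA n m (z/q) w q = T0 * ((1 - p*X*Y) * (1 - w) * (1 - p) / ((1 - p*X) * (1 - w*Y) * (1 - p*Y)))"
    and "PhiA (n-1) m (z*q) (w/q) q = T0 * ((1 - p*X*Y) * (1 - X) * (1 - z) * (1 - z*q) * (1 - p) * (1 - p*q)
                                  / ((1 - z*X) * (1 - p*X) * (1 - p*Y) * (1 - p*q*Y)))"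
    and "PhiA (n-1) (m-1) z (w*q) q = T0 * ((1 - p*X*Y) * (1 - X) * (1 - Y) * (1 - z) * (1 - w) * (1 - w*q)
                                  * (1 - p) * (1 - p*q) * (1 - p*q*q)
                                  / ((1 - p*X) * (1 - p*q*X) * (1 - w*Y) * (1 - p*Y) * (1 - p*q*Y)))"
    and "PhiA n m z w q = T0 * ((1 - p*X*Y) * (1 - p*q*X*Y) * (1 - z) * (1 - w) * (1 - p) * (1 - p*q)
                                  / ((1 - z*X) * (1 - p*X) * (1 - p*q*X) * (1 - w*Y) * (1 - p*Y) * (1 - p*q*Y)))"
  unfolding T0_def PhiY_def PhiA_def bases_and_indices
  \<comment> \<open>\<open>(pq\<^sup>3;q)\<^sub>n\<^sub>+\<^sub>m\<^sub>-\<^sub>2\<close> must first become \<open>(pq\<^sup>2;q)\<^sub>n\<^sub>+\<^sub>m\<^sub>-\<^sub>1\<close>: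
     peeling its base at index \<open>n+m-2\<close> would leave \<open>(p;q)\<^sub>n\<^sub>+\<^sub>m\<^sub>-\<^sub>2\<close>, which no rule shifts\<close>
  by (simp_all only: qpoch_mult_q_diff_two qgeneric_mult_q[OF q_nonzero] p_generic)
    (simp add: normalisation_rules divide_inverse inverse_mult_distrib X_eq Y_eq;
      (intro disjI2)?; simp add: normalisation_rules inverse_eq_divide divide_simps; simp only: mult_ac)+

lemma denominators_nonzero:
  "1 - z \<noteq> 0" "1 - z*q \<noteq> 0" "1 - w \<noteq> 0" "1 - w*q \<noteq> 0"
  "1 - p \<noteq> 0" "1 - p*q \<noteq> 0" "1 - p*q*q \<noteq> 0"
  "1 - z*X \<noteq> 0" "1 - w*Y \<noteq> 0" "1 - p*X \<noteq> 0" "1 - p*q*X \<noteq> 0" "1 - p*Y \<noteq> 0" "1 - p*q*Y \<noteq> 0"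
  using z_generic w_generic p_generic q_nonzero
  by (auto simp: X_eq Y_eq qgeneric_mult_q qgeneric_products_neq_one)

lemma powers_in_p_X_Y:
  "1 - z * w / q = 1 - p" "1 - z * w * q powi (m - 1) = 1 - p * Y" "1 - w * q powi (m - 1) = 1 - w * Y / q"
  "1 - q powi (m - 1) = 1 - Y / q" "1 - z * w * q powi (n + m - 1) = 1 - p * X * Y"
  "1 - z * w = 1 - p * q" "1 - z * w * q = 1 - p * q * q"
  using q_nonzero by (auto simp: p_eq X_eq Y_eq power_int_diff power_int_add field_simps)

lemma numerator_identity_constant:
  "(1 - p*X) * (1 - w*Y) - w * (1 - Y) * (1 - z*X/q) = (1 - p*X*Y) * (1 - w)"
  using q_nonzero by (simp add: p_eq field_simps)

lemma numerator_identity_u: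
  "(1 - p*X) * (1 - p*q*Y) - z * w * (1 - X/q) * (1 - Y) = (1 - p*X*Y) * (1 - p*q)"
  using q_nonzero by (simp add: p_eq field_simps)

lemma numerator_identity_uv:
  "(1 - z*X/q) * (1 - p*q*Y) - z * (1 - X/q) * (1 - w*Y) = (1 - p*X*Y) * (1 - z)"
  using q_nonzero by (simp add: p_eq field_simps)

lemma numerator_identity_sum:
  "(1 - w) * (1 - z*X) * (1 - p*q*X) * (1 - p*Y) * (1 - p*q*Y)
    - z * (1 - w*Y/q) * (1 - X) * (1 - p*q) * (1 - p*q*X) * (1 - w*Y)
    + z * w^2 * (1 - Y/q) * (1 - X) * (1 - Y) * (1 - z) * (1 - z*X)
    = (1 - p*X*Y) * (1 - p*q*X*Y) * (1 - z) * (1 - w) * (1 - p*q)"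
  using q_nonzero by (simp add: p_eq field_simps power2_eq_square)

lemma PhiCD_constant_coefficient:
  "PhiY n m 0 0 0 (z/q) (w/q) q - w * PhiY n m 0 1 (-1) (z/q) (w/q) q
     = (1 - z * w * q powi (m - 1)) / (1 - z * w / q) * PhiA n m (z/q) w q"
proof -
  note nz = denominators_nonzero
  have "1 - w * ((1 - Y) * (1 - z*X/q) / ((1 - p*X) * (1 - w*Y)))
      = (1 - p*Y) / (1 - p) * ((1 - p*X*Y) * (1 - w) * (1 - p) / ((1 - p*X) * (1 - w*Y) * (1 - p*Y)))"
    (is "?lhs = ?rhs")
  proof -
    have "?lhs = ((1 - p*X) * (1 - w*Y) - w * (1 - Y) * (1 - z*X/q)) / ((1 - p*X) * (1 - w*Y))"
      using nz by (simp add: diff_divide_eq_iff)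
    also have "\<dots> = ?rhs"
      unfolding numerator_identity_constant using nz by (simp add: divide_simps)
    finally show ?thesis .
  qed
  from arg_cong[OF this, of "times (PhiY n m 0 0 0 (z/q) (w/q) q)"] show ?thesis
    unfolding PhiY_ratios PhiA_ratios powers_in_p_X_Y
    by (simp only: right_diff_distrib mult_1_right mult_1_left mult.left_commute mult.commute)
qed

lemma PhiCD_u_coefficient:
  "- z * PhiY n m 1 (-1) 0 (z/q) (w/q) q + z^2 * w * PhiY n m 2 (-1) (-1) (z/q) (w/q) q
     = - z * (1 - w * q powi (m - 1)) / (qpoch z q 2 * (1 - z * w / q)) * PhiA (n-1) m (z*q) (w/q) q"
proof -
  note nz = denominators_nonzero
  have "- z * ((1 - X) * (1 - w*Y/q) / ((1 - z*X) * (1 - p*Y)))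
      + z^2 * w * ((1 - X) * (1 - X/q) * (1 - Y) * (1 - w*Y/q) / ((1 - z*X) * (1 - p*X) * (1 - p*Y) * (1 - p*q*Y)))
      = - z * (1 - w*Y/q) / ((1 - z) * (1 - z*q) * (1 - p))
      * ((1 - p*X*Y) * (1 - X) * (1 - z) * (1 - z*q) * (1 - p) * (1 - p*q)
         / ((1 - z*X) * (1 - p*X) * (1 - p*Y) * (1 - p*q*Y)))"
    (is "?lhs = ?rhs")
  proof -
    have "?lhs = - z * (1 - X) * (1 - w*Y/q) * ((1 - p*X) * (1 - p*q*Y) - z * w * (1 - X/q) * (1 - Y))
        / ((1 - z*X) * (1 - p*Y) * (1 - p*X) * (1 - p*q*Y))"
      using nz by (simp add: divide_simps) (simp add: algebra_simps power2_eq_square)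
    also have "\<dots> = ?rhs"
      unfolding numerator_identity_u using nz by (simp add: divide_simps)
    finally show ?thesis .
  qed
  from arg_cong[OF this, of "times (PhiY n m 0 0 0 (z/q) (w/q) q)"] show ?thesis
    unfolding PhiY_ratios PhiA_ratios qpoch_two powers_in_p_X_Y
    by (simp only: mult.left_commute[of _ "PhiY n m 0 0 0 (z/q) (w/q) q"] distrib_left[symmetric])
qed

lemma PhiCD_uv_coefficient:
  "z * w^2 * PhiY n m 1 1 (-2) (z/q) (w/q) q - z^2 * w^2 * PhiY n m 2 0 (-2) (z/q) (w/q) q
     = z * w^2 * (1 - q powi (m - 1)) / (qpoch w q 2 * qpoch (z*w) q 2 * (1 - z * w / q))
       * PhiA (n-1) (m-1) z (w*q) q"
proof -
  note nz = denominators_nonzero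
  have "z * w^2 * ((1 - X) * (1 - Y) * (1 - Y/q) * (1 - z*X/q)
                   / ((1 - p*X) * (1 - p*q*X) * (1 - w*Y) * (1 - p*Y)))
      - z^2 * w^2 * ((1 - X) * (1 - X/q) * (1 - Y) * (1 - Y/q)
                   / ((1 - p*X) * (1 - p*q*X) * (1 - p*Y) * (1 - p*q*Y)))
      = z * w^2 * (1 - Y/q) / ((1 - w) * (1 - w*q) * ((1 - p*q) * (1 - p*q*q)) * (1 - p))
      * ((1 - p*X*Y) * (1 - X) * (1 - Y) * (1 - z) * (1 - w) * (1 - w*q) * (1 - p) * (1 - p*q) * (1 - p*q*q)
         / ((1 - p*X) * (1 - p*q*X) * (1 - w*Y) * (1 - p*Y) * (1 - p*q*Y)))"
    (is "?lhs = ?rhs")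
  proof -
    have "?lhs = z * w^2 * (1 - X) * (1 - Y) * (1 - Y/q)
          * ((1 - z*X/q) * (1 - p*q*Y) - z * (1 - X/q) * (1 - w*Y))
        / ((1 - p*X) * (1 - p*q*X) * (1 - w*Y) * (1 - p*Y) * (1 - p*q*Y))"
      using nz by (simp add: divide_simps) (simp add: algebra_simps power2_eq_square)
    also have "\<dots> = ?rhs"
      unfolding numerator_identity_uv using nz by (simp add: divide_simps)
    finally show ?thesis .
  qed
  from arg_cong[OF this, of "times (PhiY n m 0 0 0 (z/q) (w/q) q)"] show ?thesis
    unfolding PhiY_ratios PhiA_ratios qpoch_two powers_in_p_X_Y
    by (simp only: mult.left_commute[of _ "PhiY n m 0 0 0 (z/q) (w/q) q"] right_diff_distrib[symmetric])
qed

lemma PhiA_combination: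
  "(1 - z * w * q powi (m - 1)) * PhiA n m (z/q) w q
   - z * (1 - w * q powi (m - 1)) / qpoch z q 2 * PhiA (n-1) m (z*q) (w/q) q
   + z * w^2 * (1 - q powi (m - 1)) / (qpoch w q 2 * qpoch (z*w) q 2) * PhiA (n-1) (m-1) z (w*q) q
   = (1 - z * w * q powi (n + m - 1)) * PhiA n m z w q"
proof -
  note nz = denominators_nonzero
  have "(1 - p*Y) * ((1 - p*X*Y) * (1 - w) * (1 - p) / ((1 - p*X) * (1 - w*Y) * (1 - p*Y)))
      - z * (1 - w*Y/q) / ((1 - z) * (1 - z*q))
        * ((1 - p*X*Y) * (1 - X) * (1 - z) * (1 - z*q) * (1 - p) * (1 - p*q)
           / ((1 - z*X) * (1 - p*X) * (1 - p*Y) * (1 - p*q*Y)))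
      + z * w^2 * (1 - Y/q) / ((1 - w) * (1 - w*q) * ((1 - p*q) * (1 - p*q*q)))
        * ((1 - p*X*Y) * (1 - X) * (1 - Y) * (1 - z) * (1 - w) * (1 - w*q) * (1 - p) * (1 - p*q) * (1 - p*q*q)
           / ((1 - p*X) * (1 - p*q*X) * (1 - w*Y) * (1 - p*Y) * (1 - p*q*Y)))
      = (1 - p*X*Y) * ((1 - p*X*Y) * (1 - p*q*X*Y) * (1 - z) * (1 - w) * (1 - p) * (1 - p*q)
           / ((1 - z*X) * (1 - p*X) * (1 - p*q*X) * (1 - w*Y) * (1 - p*Y) * (1 - p*q*Y)))"
    (is "?lhs = ?rhs")
  proof -
    have "?lhs = (1 - p*X*Y) * (1 - p)
          * ((1 - w) * (1 - z*X) * (1 - p*q*X) * (1 - p*Y) * (1 - p*q*Y)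
             - z * (1 - w*Y/q) * (1 - X) * (1 - p*q) * (1 - p*q*X) * (1 - w*Y)
             + z * w^2 * (1 - Y/q) * (1 - X) * (1 - Y) * (1 - z) * (1 - z*X))
        / ((1 - z*X) * (1 - p*X) * (1 - p*q*X) * (1 - w*Y) * (1 - p*Y) * (1 - p*q*Y))"
      using nz by (simp add: divide_simps) (simp add: algebra_simps power2_eq_square)
    also have "\<dots> = ?rhs"
      unfolding numerator_identity_sum using nz by (simp add: divide_simps)
    finally show ?thesis .
  qed
  from arg_cong[OF this, of "times (PhiY n m 0 0 0 (z/q) (w/q) q)"] show ?thesis
    unfolding PhiA_ratios qpoch_two powers_in_p_X_Y
    by (simp only: mult.left_commute[of _ "PhiY n m 0 0 0 (z/q) (w/q) q"]
        right_diff_distrib[symmetric] distrib_left[symmetric])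
qed

end

theorem lemma4p8:
  fixes u v z w q :: complex
  assumes q0: "q \<noteq> 0"
    and qgen: "\<forall>k::int. k \<noteq> 0 \<longrightarrow> q powi k \<noteq> 1"
    and z0: "z \<noteq> 0" and w0: "w \<noteq> 0"
    and zgen: "\<forall>k::int. z \<noteq> q powi k"
    and wgen: "\<forall>k::int. w \<noteq> q powi k"
    and zwgen: "\<forall>k::int. z * w \<noteq> q powi k"
  shows "\<forall>n m :: int.
           PhiCD n m u v 1 1 z w q =
             (PhiU n m u v z w q - z * w * q powi (m - 1) * PhiU n m (u/z) (v/w) z w q)
             / (1 - z * w / q)
         \<and> PhiCD n m 1 1 1 1 z w q =
             (1 - z * w * q powi (n + m - 1)) / (1 - z * w / q) * PhiA n m z w q"
proof -
  have "qgeneric z q" "qgeneric w q" "qgeneric (z * w) q"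
    using zgen wgen zwgen q0 by (simp_all add: qgeneric_iff_not_powi)
  note hyps = q0 qgen this(1,2) qgeneric_divide_q[OF q0, THEN iffD2, OF this(3)] refl refl refl
  have general: "PhiCD n m u v 1 1 z w q =
      (PhiU n m u v z w q - z * w * q powi (m - 1) * PhiU n m (u/z) (v/w) z w q) / (1 - z * w / q)"
    for n m u v
    unfolding PhiCD_1_1_expand PhiCD_constant_coefficient[OF hyps] PhiCD_u_coefficient[OF hyps]
      PhiCD_uv_coefficient[OF hyps] PhiU_combination[OF z0 w0]
    by (simp add: add_divide_distrib diff_divide_distrib algebra_simps)
  have special: "PhiCD n m 1 1 1 1 z w q =
      (1 - z * w * q powi (n + m - 1)) / (1 - z * w / q) * PhiA n m z w q" for n m
    unfolding general PhiU_combination[OF z0 w0] using PhiA_combination[OF hyps] by simp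
  show ?thesis
    using general special by blast
qed

end
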